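(* If $\mathcal{O}_0$ and $\mathcal{O}_1$ are decomposable sets of upwards closed modalities for the same signature $\Sigma$, then $\mathcal{O}_0\cup\mathcal{O}_1$ is decomposable.
   Context: $\Sigma$ is a signature of effect operations with arities $\alpha^n\to\alpha$, $\mathbf{N}\times\alpha^n\to\alpha$, $\alpha^{\mathbf{N}}\to\alpha$ or $\mathbf{N}\times\alpha^{\mathbf{N}}\to\alpha$. $TX$ is the set of possibly infinite labelled trees with leaves $\bot$ or elements of $X$ and internal nodes labelled by operations (or $\sigma_m$, $m\in\mathbb{N}$) with children according to arity; $t\le t'$ iff $t$ is obtained from $t'$ by replacing subtrees with $\bot$. $\mu:TTX\to TX$ replaces each leaf of a tree of trees by that tree. $\mathbf{1}=\{*\}$. A modality $o$ has an interpretation $[\![o]\!]\subseteq T\mathbf{1}$; upwards closed means $[\![o]\!]$ is upward closed under $\le$. $t[\in P]\in T\mathbf{1}$ replaces leaves in $P$ by $*$ and other $X$-leaves by $\bot$; $o(A)=\{t\in TX\mid t[\in A]\in[\![o]\!]\}$. For a set $\mathcal{O}$ of modalities: $\mathcal{T}_{\mathcal{O}}$ is the least class of formulas containing $o(\top),o(\bot)$ ($o\in\mathcal{O}$) closed under arbitrary $\bigvee,\bigwedge$, with $[\![o(\top)]\!]=o(\{*\})$, $[\![o(\bot)]\!]=o(\emptyset)$, unions/intersections; $t\trianglelefteq_{\mathcal{O}} t'$ iff $\forall\Phi\in\mathcal{T}_{\mathcal{O}}$, $t\in[\![\Phi]\!]\Rightarrow t'\in[\![\Phi]\!]$; for $r,r'\in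 TT\mathbf{1}$, $r\preccurlyeq_{\mathcal{O}} r'$ iff $\forall o\in\mathcal{O}\,\forall\Phi\in\mathcal{T}_{\mathcal{O}}$, $r\in o([\![\Phi]\!])\Rightarrow r'\in o([\![\Phi]\!])$. $\mathcal{O}$ is decomposable if $r\preccurlyeq_{\mathcal{O}} r'$ implies $\mu r\trianglelefteq_{\mathcal{O}}\mu r'$ for all $r,r'\in TT\mathbf{1}$. *)

theory Defs
  imports Main
begin

text \<open>The four admissible arities of an effect operation:
  Fin n = alpha^n -> alpha,  NFin n = N x alpha^n -> alpha,
  Inf = alpha^N -> alpha,    NInf = N x alpha^N -> alpha.
  A signature is a type of operation symbols together with an arity map.\<close>
datatype arity = Fin nat | NFin nat | Inf | NInf

text \<open>Internal nodes carry an operation symbol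
  and, for operations with a natural-number parameter, the parameter m (Some m; this
  is the node label sigma_m), otherwise None.\<close>
codatatype ('o, 'x) tree =
    Bot
  | Leaf 'x
  | FNode 'o "nat option" "('o, 'x) tree list"
  | INode 'o "nat option" "nat \<Rightarrow> ('o, 'x) tree"

text \<open>Well-formedness w.r.t. the signature, with leaves taken from the set A.
  T X = trees ar X.\<close>
coinductive wft :: "('o \<Rightarrow> arity) \<Rightarrow> 'x set \<Rightarrow> ('o, 'x) tree \<Rightarrow> bool"
  for ar :: "'o \<Rightarrow> arity" and A :: "'x set" where
  wft_Bot: "wft ar A Bot"
| wft_Leaf: "x \<in> A \<Longrightarrow> wft ar A (Leaf x)"
| wft_Fin: "ar f = Fin n \<Longrightarrow> length cs = n \<Longrightarrow> (\<forall>c\<in>set cs. wft ar A c)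
      \<Longrightarrow> wft ar A (FNode f None cs)"
| wft_NFin: "ar f = NFin n \<Longrightarrow> length cs = n \<Longrightarrow> (\<forall>c\<in>set cs. wft ar A c)
      \<Longrightarrow> wft ar A (FNode f (Some m) cs)"
| wft_Inf: "ar f = Inf \<Longrightarrow> (\<forall>i. wft ar A (cs i)) \<Longrightarrow> wft ar A (INode f None cs)"
| wft_NInf: "ar f = NInf \<Longrightarrow> (\<forall>i. wft ar A (cs i)) \<Longrightarrow> wft ar A (INode f (Some m) cs)"

definition trees :: "('o \<Rightarrow> arity) \<Rightarrow> 'x set \<Rightarrow> ('o, 'x) tree set" where
  "trees ar X = {t. wft ar X t}"

coinductive tle :: "('o, 'x) tree \<Rightarrow> ('o, 'x) tree \<Rightarrow> bool" where
  tle_Bot: "tle Bot t"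
| tle_Leaf: "tle (Leaf x) (Leaf x)"
| tle_FNode: "list_all2 tle cs ds \<Longrightarrow> tle (FNode f k cs) (FNode f k ds)"
| tle_INode: "(\<forall>i. tle (cs i) (ds i)) \<Longrightarrow> tle (INode f k cs) (INode f k ds)"

primcorec mu :: "('o, ('o, 'x) tree) tree \<Rightarrow> ('o, 'x) tree" where
  "mu r = (case r of
      Bot \<Rightarrow> Bot
    | Leaf t \<Rightarrow> t
    | FNode f k cs \<Rightarrow> FNode f k (map mu cs)
    | INode f k cs \<Rightarrow> INode f k (\<lambda>i. mu (cs i)))"

text \<open>t[\<in>P]: leaves in P become *, other leaves become Bot.\<close>
primcorec restr :: "'x set \<Rightarrow> ('o, 'x) tree \<Rightarrow> ('o, unit) tree" where
  "restr P t = (case t of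
      Bot \<Rightarrow> Bot
    | Leaf x \<Rightarrow> (if x \<in> P then Leaf () else Bot)
    | FNode f k cs \<Rightarrow> FNode f k (map (restr P) cs)
    | INode f k cs \<Rightarrow> INode f k (\<lambda>i. restr P (cs i)))"

text \<open>Modalities are elements of a type 'm with interpretation I md \<subseteq> T 1.
  md(A) = {t \<in> T X | t[\<in>A] \<in> [[md]]}  (here X is the whole leaf type).\<close>
definition omod :: "('o \<Rightarrow> arity) \<Rightarrow> ('m \<Rightarrow> ('o, unit) tree set) \<Rightarrow> 'm \<Rightarrow> 'x set
    \<Rightarrow> ('o, 'x) tree set" where
  "omod ar I md A = {t \<in> trees ar UNIV. restr A t \<in> I md}"

definition upclosed :: "('o \<Rightarrow> arity) \<Rightarrow> ('m \<Rightarrow> ('o, unit) tree set) \<Rightarrow> 'm \<Rightarrow> bool" where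
  "upclosed ar I md \<longleftrightarrow>
     (\<forall>t t'. t \<in> I md \<longrightarrow> t' \<in> trees ar UNIV \<longrightarrow> tle t t' \<longrightarrow> t' \<in> I md)"

text \<open>Interpretations [[Phi]] \<subseteq> T 1 of the formulas Phi in T_O: the least class containing
  md(top) = md({*}) and md(bot) = md({}) for md \<in> Os, closed under arbitrary unions and
  intersections (the empty intersection being T 1).\<close>
inductive_set fsem :: "('o \<Rightarrow> arity) \<Rightarrow> ('m \<Rightarrow> ('o, unit) tree set) \<Rightarrow> 'm set
    \<Rightarrow> ('o, unit) tree set set"
  for ar :: "'o \<Rightarrow> arity" and I :: "'m \<Rightarrow> ('o, unit) tree set" and Os :: "'m set" where
  fsem_top: "md \<in> Os \<Longrightarrow> omod ar I md {()} \<in> fsem ar I Os"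
| fsem_bot: "md \<in> Os \<Longrightarrow> omod ar I md {} \<in> fsem ar I Os"
| fsem_Sup: "(\<forall>S\<in>F. S \<in> fsem ar I Os) \<Longrightarrow> \<Union>F \<in> fsem ar I Os"
| fsem_Inf: "(\<forall>S\<in>F. S \<in> fsem ar I Os) \<Longrightarrow> trees ar UNIV \<inter> \<Inter>F \<in> fsem ar I Os"

definition tri :: "('o \<Rightarrow> arity) \<Rightarrow> ('m \<Rightarrow> ('o, unit) tree set) \<Rightarrow> 'm set
    \<Rightarrow> ('o, unit) tree \<Rightarrow> ('o, unit) tree \<Rightarrow> bool" where
  "tri ar I Os t t' \<longleftrightarrow> (\<forall>\<Phi>\<in>fsem ar I Os. t \<in> \<Phi> \<longrightarrow> t' \<in> \<Phi>)"

definition curly :: "('o \<Rightarrow> arity) \<Rightarrow> ('m \<Rightarrow> ('o, unit) tree set) \<Rightarrow> 'm set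
    \<Rightarrow> ('o, ('o, unit) tree) tree \<Rightarrow> ('o, ('o, unit) tree) tree \<Rightarrow> bool" where
  "curly ar I Os r r' \<longleftrightarrow>
     (\<forall>md\<in>Os. \<forall>\<Phi>\<in>fsem ar I Os. r \<in> omod ar I md \<Phi> \<longrightarrow> r' \<in> omod ar I md \<Phi>)"

definition decomposable :: "('o \<Rightarrow> arity) \<Rightarrow> ('m \<Rightarrow> ('o, unit) tree set) \<Rightarrow> 'm set \<Rightarrow> bool" where
  "decomposable ar I Os \<longleftrightarrow>
     (\<forall>r r'. r \<in> trees ar (trees ar UNIV) \<longrightarrow> r' \<in> trees ar (trees ar UNIV) \<longrightarrow>
        curly ar I Os r r' \<longrightarrow> tri ar I Os (mu r) (mu r'))"

end

theory Submission
  imports Defs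
begin

text \<open>A formula over \<open>O\<^sub>0 \<union> O\<^sub>1\<close> is built from basic formulas of \<open>O\<^sub>0\<close> or of \<open>O\<^sub>1\<close>, so the
  preorder of \<open>O\<^sub>0 \<union> O\<^sub>1\<close> on \<open>T 1\<close> is the intersection of the two preorders.  On the other
  hand, the relation on \<open>T T 1\<close> only gets stronger as the set of modalities grows.
  Hence \<open>r \<preccurlyeq> r'\<close> for \<open>O\<^sub>0 \<union> O\<^sub>1\<close> gives it for \<open>O\<^sub>0\<close> and \<open>O\<^sub>1\<close>, decomposability of each yields
  \<open>\<mu> r \<unlhd> \<mu> r'\<close> for both, and these combine to \<open>\<mu> r \<unlhd> \<mu> r'\<close> for the union.\<close>

lemma fsem_mono: "\<Phi> \<in> fsem ar I Os \<Longrightarrow> Os \<subseteq> Os' \<Longrightarrow> \<Phi> \<in> fsem ar I Os'"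
  by (induction rule: fsem.induct) (auto intro: fsem.intros)

lemma trees_UNIV_in_fsem: "trees ar UNIV \<in> fsem ar I Os"
  using fsem_Inf[of "{}" ar I Os] by simp

lemma curly_antimono: "curly ar I Os' r r' \<Longrightarrow> Os \<subseteq> Os' \<Longrightarrow> curly ar I Os r r'"
  unfolding curly_def using fsem_mono by (metis subsetD)

lemma tri_Un:
  assumes tri0: "tri ar I O0 t t'" and tri1: "tri ar I O1 t t'"
  shows "tri ar I (O0 \<union> O1) t t'"
  unfolding tri_def
proof
  fix \<Phi> assume "\<Phi> \<in> fsem ar I (O0 \<union> O1)"
  then show "t \<in> \<Phi> \<longrightarrow> t' \<in> \<Phi>"
  proof (induction rule: fsem.induct)
    case (fsem_top md)
    then have "omod ar I md {()} \<in> fsem ar I O0 \<or> omod ar I md {()} \<in> fsem ar I O1"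
      by (auto intro: fsem.fsem_top)
    then show ?case using tri0 tri1 unfolding tri_def by auto
  next
    case (fsem_bot md)
    then have "omod ar I md {} \<in> fsem ar I O0 \<or> omod ar I md {} \<in> fsem ar I O1"
      by (auto intro: fsem.fsem_bot)
    then show ?case using tri0 tri1 unfolding tri_def by auto
  next
    case (fsem_Sup F)
    then show ?case by blast
  next
    case (fsem_Inf F)
    have "t \<in> trees ar UNIV \<longrightarrow> t' \<in> trees ar UNIV"
      using tri0 trees_UNIV_in_fsem[of ar I O0] unfolding tri_def by simp
    with fsem_Inf show ?case by auto
  qed
qed

lemma decomposable_Un:
  assumes "decomposable ar I O0" and "decomposable ar I O1"
  shows "decomposable ar I (O0 \<union> O1)"
  unfolding decomposable_def
proof (intro allI impI)
  fix r r'
  assume r: "r \<in> trees ar (trees ar UNIV)" "r' \<in> trees ar (trees ar UNIV)"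
    and curly_Un: "curly ar I (O0 \<union> O1) r r'"
  have "tri ar I O0 (mu r) (mu r')"
    using assms(1) r curly_antimono[OF curly_Un, of O0] unfolding decomposable_def by simp
  moreover have "tri ar I O1 (mu r) (mu r')"
    using assms(2) r curly_antimono[OF curly_Un, of O1] unfolding decomposable_def by simp
  ultimately show "tri ar I (O0 \<union> O1) (mu r) (mu r')" by (rule tri_Un)
qed

theorem lemma4p20:
  fixes ar :: "'o \<Rightarrow> arity" and I :: "'m \<Rightarrow> ('o, unit) tree set"
    and O0 O1 :: "'m set"
  assumes "\<forall>md\<in>O0 \<union> O1. I md \<subseteq> trees ar UNIV"
    and "\<forall>md\<in>O0. upclosed ar I md"
    and "\<forall>md\<in>O1. upclosed ar I md"
    and "decomposable ar I O0"
    and "decomposable ar I O1"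
  shows "decomposable ar I (O0 \<union> O1)"
  using assms(4,5) by (rule decomposable_Un)

end
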